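(* Let $w\ge 3$ and $v=w-1$. Then $$\sum_{\substack{a+b=w\\ a\ge2,\ b\ge1}} T(a,b)=2\Big(\zeta(w)-\zeta(\bar w)+\zeta(\bar v,\bar1)+\zeta(\bar1,\bar v)-\zeta(\bar v,1)-\zeta(\bar1,v)\Big).$$
   Context: Multiple $T$-values: for positive integers $s_1,\dots,s_d$ with $s_1>1$, $T(s_1,\dots,s_d)=\sum_{m_1>\dots>m_d>0,\ m_j\equiv d-j+1\ (\mathrm{mod}\ 2)}\frac{2^d}{m_1^{s_1}\cdots m_d^{s_d}}$. Euler sums: $\zeta(s_1,\dots,s_d;z_1,\dots,z_d)=\sum_{n_1>\dots>n_d>0}\frac{z_1^{n_1}\cdots z_d^{n_d}}{n_1^{s_1}\cdots n_d^{s_d}}$ for $z_j\in\{\pm1\}$ (convergent iff $(s_1,z_1)\ne(1,1)$); a bar over the $j$-th argument means $z_j=-1$, no bar means $z_j=1$. *)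

theory Defs
  imports Complex_Main
begin

text \<open>Euler sums. An argument list is a list of pairs (s_j, z_j) with z_j = 1 or z_j = -1.
  Truncated sum over N > n_1 > ... > n_d > 0 of z_1^n_1 ... z_d^n_d / (n_1^s_1 ... n_d^s_d).\<close>
fun euler_partial :: "(nat \<times> real) list \<Rightarrow> nat \<Rightarrow> real" where
  "euler_partial [] N = 1"
| "euler_partial ((s, z) # rest) N =
     (\<Sum>n\<in>{1..<N}. z ^ n / real n ^ s * euler_partial rest n)"

definition euler_zeta :: "(nat \<times> real) list \<Rightarrow> real" where
  "euler_zeta l = lim (\<lambda>N. euler_partial l N)"

text \<open>Truncated sum over N > m_1 > ... > m_d > 0 with
  m_j \<equiv> d - j + 1 (mod 2) of 2^d / (m_1^s_1 ... m_d^s_d). The argument at position j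
  is followed by d - j further arguments, so the parity condition is
  m_j \<equiv> length(remaining list including s_j) (mod 2).\<close>
fun T_partial :: "nat list \<Rightarrow> nat \<Rightarrow> real" where
  "T_partial [] N = 1"
| "T_partial (s # rest) N =
     (\<Sum>m\<in>{m\<in>{1..<N}. m mod 2 = (length rest + 1) mod 2}.
        2 / real m ^ s * T_partial rest m)"

definition T_value :: "nat list \<Rightarrow> real" where
  "T_value l = lim (\<lambda>N. T_partial l N)"

end

(*
  Write O_s(N) = odd_zeta_partial s N for the sum of 1/k^s over odd k < N, and w = v + 1. For even m > odd n,
  sum_{a=2..v} 1/(m^a n^(w-a)) = 1/((m-n) n^v) - 1/((m-n) m^v) - 1/(m n^v); since m - n runs over
  the odd numbers, summing these three terms over the pairs turns the truncated left-hand side into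
    4 (sum_{odd n<N} O_1(N-n)/n^v - sum_{even m<N} (O_1(m)/m^v + O_v(m)/m)).
  In the six truncated Euler sums only odd inner indices survive, and the product rule
  O_1(N) O_v(N) = O_w(N) + sum_{odd m<N} (O_1(m)/m^v + O_v(m)/m) turns their combination into the same
  expression with O_1(N) O_v(N) = sum_{odd n<N} O_1(N)/n^v in place of the first sum. The difference
  sum_{odd n<N} (O_1(N) - O_1(N-n))/n^v is O((log N)^2 / N). All truncated sums converge: absolutely
  when the outer exponent is at least 2, and by summation by parts against the alternating harmonic
  series for the Euler sums with first argument 1 (barred).
*)
theory Submission
  imports Defs "HOL-Analysis.Analysis" "HOL-Real_Asymp.Real_Asymp"
begin

section \<open>Truncated sums\<close>

lemma sum_atLeast1_triangle_swap:
  "(\<Sum>m\<in>{1..<N}. \<Sum>n\<in>{1..<m}. f m n) = (\<Sum>n\<in>{1..<N}. \<Sum>m\<in>{Suc n..<N}. f m n :: 'a::comm_monoid_add)"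
  by (induction N) (auto simp: sum.distrib atLeastLessThanSuc)

lemma sum_mult_partial_sums_by_parts:
  fixes a c :: "nat \<Rightarrow> 'a::comm_ring"
  shows "(\<Sum>m\<in>{1..<N}. a m * (\<Sum>n\<in>{1..<m}. c n)) =
    (\<Sum>n\<in>{1..<N}. c n) * (\<Sum>m\<in>{1..<N}. a m) - (\<Sum>n\<in>{1..<N}. c n * (\<Sum>m\<in>{1..<Suc n}. a m))"
proof -
  have "(\<Sum>m\<in>{1..<N}. a m * (\<Sum>n\<in>{1..<m}. c n)) = (\<Sum>m\<in>{1..<N}. \<Sum>n\<in>{1..<m}. c n * a m)"
    by (simp add: sum_distrib_left mult.commute)
  also have "\<dots> = (\<Sum>n\<in>{1..<N}. c n * (\<Sum>m\<in>{Suc n..<N}. a m))"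
    unfolding sum_atLeast1_triangle_swap sum_distrib_left ..
  also have "\<dots> = (\<Sum>n\<in>{1..<N}. c n * (\<Sum>m\<in>{1..<N}. a m) - c n * (\<Sum>m\<in>{1..<Suc n}. a m))"
    unfolding right_diff_distrib[symmetric]
  proof (intro sum.cong refl arg_cong2[where f = times])
    fix n assume "n \<in> {1..<N}"
    then have "(\<Sum>m\<in>{1..<Suc n}. a m) + (\<Sum>m\<in>{Suc n..<N}. a m) = (\<Sum>m\<in>{1..<N}. a m)"
      by (intro sum.atLeastLessThan_concat) auto
    then show "(\<Sum>m\<in>{Suc n..<N}. a m) = (\<Sum>m\<in>{1..<N}. a m) - (\<Sum>m\<in>{1..<Suc n}. a m)"
      by (simp add: eq_diff_eq add.commute)
  qed
  finally show ?thesis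
    by (simp only: sum_subtractf sum_distrib_right)
qed

lemma sum_inverse_power_mult_power:
  fixes x y :: "'a::field"
  assumes "x \<noteq> 0" "y \<noteq> 0"
  shows "(x - y) * (\<Sum>a\<in>{1..v}. 1 / (x ^ a * y ^ (Suc v - a))) = 1 / y ^ v - 1 / x ^ v"
proof -
  define P where "P = (\<Sum>i<v. (1/y) ^ (v - Suc i) * (1/x) ^ i)"
  have "(\<Sum>a\<in>{1..v}. 1 / (x ^ a * y ^ (Suc v - a))) = P / (x * y)"
    unfolding P_def One_nat_def sum.atLeast1_atMost_eq sum_divide_distrib
  proof (intro sum.cong refl)
    fix i assume "i \<in> {..<v}"
    then have "Suc v - Suc i = Suc (v - Suc i)" by simp
    then show "1 / (x ^ Suc i * y ^ (Suc v - Suc i)) = (1/y) ^ (v - Suc i) * (1/x) ^ i / (x * y)"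
      by (simp add: power_divide)
  qed
  also have "(x - y) * (P / (x * y)) = - ((1/x - 1/y) * P)"
    using assms by (simp add: field_simps)
  also have "\<dots> = 1 / y ^ v - 1 / x ^ v"
    unfolding P_def power_diff_sumr2[symmetric] by (simp add: power_divide)
  finally show ?thesis .
qed

definition odd_zeta_partial :: "nat \<Rightarrow> nat \<Rightarrow> real" where
  "odd_zeta_partial s N = (\<Sum>k\<in>{1..<N}. if odd k then 1 / real k ^ s else 0)"

lemma odd_zeta_partial_Suc:
  "odd_zeta_partial s (Suc N) = odd_zeta_partial s N + (if odd N then 1 / real N ^ s else 0)"
  by (cases N) (auto simp: odd_zeta_partial_def)

lemma odd_zeta_partial_mult:
  "odd_zeta_partial s N * odd_zeta_partial t N = odd_zeta_partial (s + t) N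
     + (\<Sum>m\<in>{1..<N}. if odd m then odd_zeta_partial s m / real m ^ t else 0)
     + (\<Sum>m\<in>{1..<N}. if odd m then odd_zeta_partial t m / real m ^ s else 0)"
proof (induction N)
  case (Suc N)
  then show ?case
    by (cases "N = 0") (auto simp: odd_zeta_partial_Suc atLeastLessThanSuc power_add field_simps)
qed (simp add: odd_zeta_partial_def)

lemma odd_zeta_partial_diff:
  assumes "M \<le> N"
  shows "odd_zeta_partial s N - odd_zeta_partial s M = (\<Sum>k\<in>{M..<N}. if odd k then 1 / real k ^ s else 0)"
  using assms by (induction N) (auto simp: odd_zeta_partial_Suc le_Suc_eq atLeastLessThanSuc)

lemma odd_zeta_partial_reflect:
  assumes "even m"
  shows "(\<Sum>n\<in>{1..<m}. if odd n then 1 / real (m - n) else 0) = odd_zeta_partial 1 m"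
  unfolding odd_zeta_partial_def
  by (rule sum.reindex_bij_witness[where i = "\<lambda>k. m - k" and j = "\<lambda>n. m - n"]) (use assms in auto)

lemma odd_zeta_partial_shift:
  assumes "odd n" "n < N"
  shows "(\<Sum>m\<in>{Suc n..<N}. if even m then 1 / real (m - n) else 0) = odd_zeta_partial 1 (N - n)"
  unfolding odd_zeta_partial_def
  by (rule sum.reindex_bij_witness[where i = "\<lambda>k. k + n" and j = "\<lambda>m. m - n"]) (use assms in auto)

lemma T_partial_pair:
  "T_partial [a, b] N = (\<Sum>m\<in>{1..<N}. \<Sum>n\<in>{1..<m}.
     if even m \<and> odd n then 4 / (real m ^ a * real n ^ b) else 0)"
  by (simp only: T_partial.simps sum.inter_filter[OF finite_atLeastLessThan])
     (auto simp: sum_distrib_left mod2_eq_if intro!: sum.cong)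

lemma euler_partial_single: "euler_partial [(s, z)] N = (\<Sum>m\<in>{1..<N}. z ^ m / real m ^ s)"
  by simp

lemma euler_partial_pair:
  "euler_partial [(s, z), (t, y)] N = (\<Sum>m\<in>{1..<N}. z ^ m / real m ^ s * (\<Sum>n\<in>{1..<m}. y ^ n / real n ^ t))"
  by simp

lemma euler_partial_sign_diff:
  "euler_partial [(s, 1)] N - euler_partial [(s, -1)] N = 2 * odd_zeta_partial s N"
  unfolding odd_zeta_partial_def sum_distrib_left
  by (simp flip: sum_subtractf) (rule sum.cong, auto)

lemma euler_partial_pair_sign_diff:
  "euler_partial [(s, -1), (t, -1)] N - euler_partial [(s, -1), (t, 1)] N = 2 *
     ((\<Sum>m\<in>{1..<N}. if odd m then odd_zeta_partial t m / real m ^ s else 0)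
    - (\<Sum>m\<in>{1..<N}. if even m then odd_zeta_partial t m / real m ^ s else 0))"
proof -
  have "(\<Sum>n\<in>{1..<m}. (-1) ^ n / real n ^ t) - (\<Sum>n\<in>{1..<m}. 1 / real n ^ t) = -2 * odd_zeta_partial t m"
    for m
    unfolding odd_zeta_partial_def sum_subtractf[symmetric] sum_distrib_left by (intro sum.cong) auto
  then have "euler_partial [(s, -1), (t, -1)] N - euler_partial [(s, -1), (t, 1)] N =
      (\<Sum>m\<in>{1..<N}. (-1) ^ m / real m ^ s * (-2 * odd_zeta_partial t m))"
    unfolding euler_partial_pair sum_subtractf[symmetric] right_diff_distrib[symmetric] by simp
  also have "\<dots> = 2 *
     ((\<Sum>m\<in>{1..<N}. if odd m then odd_zeta_partial t m / real m ^ s else 0)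
    - (\<Sum>m\<in>{1..<N}. if even m then odd_zeta_partial t m / real m ^ s else 0))"
    unfolding sum_subtractf[symmetric] sum_distrib_left by (intro sum.cong) auto
  finally show ?thesis .
qed

lemma sum_inverse_power_from_two:
  fixes x y :: "'a::field"
  assumes "x \<noteq> 0" "y \<noteq> 0" "x \<noteq> y" "1 \<le> v"
  shows "(\<Sum>a\<in>{2..v}. 1 / (x ^ a * y ^ (Suc v - a))) =
    1 / ((x - y) * y ^ v) - 1 / ((x - y) * x ^ v) - 1 / (x * y ^ v)"
proof -
  have "{1..v} = insert 1 {2..v}" using assms by auto
  then have "(\<Sum>a\<in>{1..v}. 1 / (x ^ a * y ^ (Suc v - a))) =
      1 / (x * y ^ v) + (\<Sum>a\<in>{2..v}. 1 / (x ^ a * y ^ (Suc v - a)))"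
    by simp
  moreover have "(\<Sum>a\<in>{1..v}. 1 / (x ^ a * y ^ (Suc v - a))) = (1 / y ^ v - 1 / x ^ v) / (x - y)"
    using sum_inverse_power_mult_power[OF assms(1,2)] assms(3) by (simp add: field_simps)
  ultimately show ?thesis
    by (simp add: diff_divide_distrib eq_diff_eq ac_simps)
qed

lemma sum_even_odd_pairs_shift:
  "(\<Sum>m\<in>{1..<N}. \<Sum>n\<in>{1..<m}. if even m \<and> odd n then 1 / ((real m - real n) * real n ^ v) else 0) =
   (\<Sum>n\<in>{1..<N}. if odd n then odd_zeta_partial 1 (N - n) / real n ^ v else 0)"
  unfolding sum_atLeast1_triangle_swap
proof (intro sum.cong refl)
  fix n assume n: "n \<in> {1..<N}"
  have "(\<Sum>m\<in>{Suc n..<N}. if even m \<and> odd n then 1 / ((real m - real n) * real n ^ v) else 0) =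
      (if odd n then (\<Sum>m\<in>{Suc n..<N}. if even m then 1 / real (m - n) else 0) / real n ^ v else 0)"
    by (auto simp: sum_divide_distrib intro!: sum.cong)
  then show "(\<Sum>m\<in>{Suc n..<N}. if even m \<and> odd n then 1 / ((real m - real n) * real n ^ v) else 0) =
      (if odd n then odd_zeta_partial 1 (N - n) / real n ^ v else 0)"
    using n by (simp add: odd_zeta_partial_shift)
qed

lemma sum_even_odd_pairs_reflect:
  "(\<Sum>m\<in>{1..<N}. \<Sum>n\<in>{1..<m}. if even m \<and> odd n then 1 / ((real m - real n) * real m ^ v) else 0) =
   (\<Sum>m\<in>{1..<N}. if even m then odd_zeta_partial 1 m / real m ^ v else 0)"
proof (intro sum.cong refl)
  fix m
  have "(\<Sum>n\<in>{1..<m}. if even m \<and> odd n then 1 / ((real m - real n) * real m ^ v) else 0) =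
      (if even m then (\<Sum>n\<in>{1..<m}. if odd n then 1 / real (m - n) else 0) / real m ^ v else 0)"
    by (auto simp: sum_divide_distrib intro!: sum.cong)
  then show "(\<Sum>n\<in>{1..<m}. if even m \<and> odd n then 1 / ((real m - real n) * real m ^ v) else 0) =
      (if even m then odd_zeta_partial 1 m / real m ^ v else 0)"
    using odd_zeta_partial_reflect[of m] by simp
qed

lemma sum_T_partial_weight_pairs:
  assumes "2 \<le> v"
  shows "(\<Sum>a\<in>{2..v}. T_partial [a, Suc v - a] N) = 4 * (\<Sum>m\<in>{1..<N}. \<Sum>n\<in>{1..<m}.
    if even m \<and> odd n then
      1 / ((real m - real n) * real n ^ v) - 1 / ((real m - real n) * real m ^ v) - 1 / (real m * real n ^ v)
    else 0)"
proof -
  let ?P = "\<lambda>m n. even m \<and> odd n"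
  let ?t = "\<lambda>m n :: nat.
    1 / ((real m - real n) * real n ^ v) - 1 / ((real m - real n) * real m ^ v) - 1 / (real m * real n ^ v)"
  have "(\<Sum>a\<in>{2..v}. T_partial [a, Suc v - a] N) = (\<Sum>m\<in>{1..<N}. \<Sum>n\<in>{1..<m}.
      \<Sum>a\<in>{2..v}. if ?P m n then 4 / (real m ^ a * real n ^ (Suc v - a)) else 0)"
    unfolding T_partial_pair by (subst sum.swap) (simp add: sum.swap[of _ "{2..v}"])
  also have "\<dots> = (\<Sum>m\<in>{1..<N}. \<Sum>n\<in>{1..<m}. 4 * (if ?P m n then ?t m n else 0))"
  proof (intro sum.cong refl)
    fix m n assume "m \<in> {1..<N}" "n \<in> {1..<m}"
    then have "4 * (\<Sum>a\<in>{2..v}. 1 / (real m ^ a * real n ^ (Suc v - a))) = 4 * ?t m n"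
      using assms by (subst sum_inverse_power_from_two) auto
    then have weights: "(\<Sum>a\<in>{2..v}. 4 / (real m ^ a * real n ^ (Suc v - a))) = 4 * ?t m n"
      by (simp add: sum_distrib_left)
    show "(\<Sum>a\<in>{2..v}. if ?P m n then 4 / (real m ^ a * real n ^ (Suc v - a)) else 0) =
        4 * (if ?P m n then ?t m n else 0)"
    proof (cases "?P m n")
      case True
      then show ?thesis by (simp add: weights)
    next
      case False
      then show ?thesis by (simp only: if_not_P[OF False] sum.neutral_const) simp
    qed
  qed
  finally show ?thesis
    by (simp add: sum_distrib_left)
qed

lemma sum_T_partial_weight:
  assumes "2 \<le> v"
  shows "(\<Sum>a\<in>{2..v}. T_partial [a, Suc v - a] N) = 4 *
    ((\<Sum>n\<in>{1..<N}. if odd n then odd_zeta_partial 1 (N - n) / real n ^ v else 0)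
   - (\<Sum>m\<in>{1..<N}. if even m then odd_zeta_partial 1 m / real m ^ v else 0)
   - (\<Sum>m\<in>{1..<N}. if even m then odd_zeta_partial v m / real m else 0))"
proof -
  let ?P = "\<lambda>m n. even m \<and> odd n"
  have "(\<Sum>m\<in>{1..<N}. \<Sum>n\<in>{1..<m}. if ?P m n then
      1 / ((real m - real n) * real n ^ v) - 1 / ((real m - real n) * real m ^ v) - 1 / (real m * real n ^ v)
    else 0) =
      (\<Sum>m\<in>{1..<N}. \<Sum>n\<in>{1..<m}. if ?P m n then 1 / ((real m - real n) * real n ^ v) else 0)
    - (\<Sum>m\<in>{1..<N}. \<Sum>n\<in>{1..<m}. if ?P m n then 1 / ((real m - real n) * real m ^ v) else 0)
    - (\<Sum>m\<in>{1..<N}. \<Sum>n\<in>{1..<m}. if ?P m n then 1 / (real m * real n ^ v) else 0)"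
    unfolding sum_subtractf[symmetric] by (intro sum.cong refl) auto
  moreover have "(\<Sum>m\<in>{1..<N}. \<Sum>n\<in>{1..<m}. if ?P m n then 1 / (real m * real n ^ v) else 0) =
      (\<Sum>m\<in>{1..<N}. if even m then odd_zeta_partial v m / real m else 0)"
    unfolding odd_zeta_partial_def by (auto simp: sum_divide_distrib intro!: sum.cong)
  ultimately show ?thesis
    unfolding sum_T_partial_weight_pairs[OF assms] sum_even_odd_pairs_shift sum_even_odd_pairs_reflect
    by argo
qed

lemma euler_partial_combination:
  "2 * (euler_partial [(Suc v, 1)] N - euler_partial [(Suc v, -1)] N
        + euler_partial [(v, -1), (1, -1)] N + euler_partial [(1, -1), (v, -1)] N
        - euler_partial [(v, -1), (1, 1)] N - euler_partial [(1, -1), (v, 1)] N) = 4 *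
   (odd_zeta_partial 1 N * odd_zeta_partial v N
  - (\<Sum>m\<in>{1..<N}. if even m then odd_zeta_partial 1 m / real m ^ v else 0)
  - (\<Sum>m\<in>{1..<N}. if even m then odd_zeta_partial v m / real m else 0))"
  using euler_partial_sign_diff[of "Suc v" N]
    euler_partial_pair_sign_diff[where s = v and t = 1 and N = N]
    euler_partial_pair_sign_diff[where s = 1 and t = v and N = N, unfolded power_one_right]
    odd_zeta_partial_mult[where s = 1 and t = v and N = N, unfolded power_one_right plus_1_eq_Suc]
  by argo

lemma sum_T_partial_minus_euler_partial_combination:
  assumes "2 \<le> v"
  shows "(\<Sum>a\<in>{2..v}. T_partial [a, Suc v - a] N)
    - 2 * (euler_partial [(Suc v, 1)] N - euler_partial [(Suc v, -1)] N
        + euler_partial [(v, -1), (1, -1)] N + euler_partial [(1, -1), (v, -1)] N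
        - euler_partial [(v, -1), (1, 1)] N - euler_partial [(1, -1), (v, 1)] N) =
    -4 * (\<Sum>n\<in>{1..<N}. if odd n then (odd_zeta_partial 1 N - odd_zeta_partial 1 (N - n)) / real n ^ v else 0)"
proof -
  have "odd_zeta_partial 1 N * odd_zeta_partial v N =
      (\<Sum>n\<in>{1..<N}. if odd n then odd_zeta_partial 1 N / real n ^ v else 0)"
    unfolding odd_zeta_partial_def[of v N] sum_distrib_left by (intro sum.cong) auto
  moreover have "(\<Sum>n\<in>{1..<N}. if odd n then (odd_zeta_partial 1 N - odd_zeta_partial 1 (N - n)) / real n ^ v else 0) =
      (\<Sum>n\<in>{1..<N}. if odd n then odd_zeta_partial 1 N / real n ^ v else 0)
    - (\<Sum>n\<in>{1..<N}. if odd n then odd_zeta_partial 1 (N - n) / real n ^ v else 0)"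
    unfolding sum_subtractf[symmetric] by (intro sum.cong refl) (simp add: diff_divide_distrib)
  ultimately show ?thesis
    using sum_T_partial_weight[OF assms, where N = N] euler_partial_combination[where N = N and v = v]
    by argo
qed

section \<open>Passage to the limit\<close>

lemma convergent_sum_atLeast1:
  fixes f :: "nat \<Rightarrow> 'a::real_normed_vector"
  assumes "summable f"
  shows "convergent (\<lambda>N. \<Sum>m\<in>{1..<N}. f m)"
proof -
  have "(\<Sum>m\<in>{1..<Suc N}. f m) = (\<Sum>m<Suc N. f m) - f 0" for N
    by (simp add: lessThan_atLeast0 sum.atLeast_Suc_lessThan)
  moreover have "(\<lambda>N. (\<Sum>m<Suc N. f m) - f 0) \<longlonglongrightarrow> suminf f - f 0"
    using LIMSEQ_Suc[OF summable_LIMSEQ[OF assms]] by (rule tendsto_diff) simp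
  ultimately have "convergent (\<lambda>N. \<Sum>m\<in>{1..<Suc N}. f m)"
    unfolding convergent_def by auto
  then show ?thesis
    using convergent_Suc_iff[of "\<lambda>N. \<Sum>m\<in>{1..<N}. f m"] by blast
qed

lemma sum_atLeast1_inverse_le_ln:
  assumes "1 \<le> N"
  shows "(\<Sum>k\<in>{1..<N}. 1 / real k) \<le> 1 + ln (real N)"
proof -
  have "(\<Sum>k\<in>{1..<N}. 1 / real k) \<le> harm N"
    unfolding harm_def inverse_eq_divide by (rule sum_mono2) auto
  also have "\<dots> \<le> 1 + ln (real N)"
    using euler_mascheroni_sequence_decreasing[of 1 N] assms by (simp add: harm_def)
  finally show ?thesis .
qed

lemma convergent_double_sum_if_bounded:
  fixes f :: "nat \<Rightarrow> nat \<Rightarrow> real"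
  assumes bound: "\<And>m n. 1 \<le> n \<Longrightarrow> n < m \<Longrightarrow> \<bar>f m n\<bar> \<le> C / (real m ^ 2 * real n)"
  shows "convergent (\<lambda>N. \<Sum>m\<in>{1..<N}. \<Sum>n\<in>{1..<m}. f m n)"
proof (rule convergent_sum_atLeast1, rule summable_comparison_test)
  have "summable (\<lambda>m. (1 + ln (real m)) / real m ^ 2)"
  proof (rule summable_comparison_test_bigo)
    show "summable (\<lambda>m. norm (real m powr (-3/2)))"
      using summable_real_powr_iff[of "-3/2"] by simp
    show "(\<lambda>m. (1 + ln (real m)) / real m ^ 2) \<in> O(\<lambda>m. real m powr (-3/2))"
      by real_asymp
  qed
  then show "summable (\<lambda>m. \<bar>C\<bar> * ((1 + ln (real m)) / real m ^ 2))"
    by (rule summable_mult)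
  show "\<exists>M. \<forall>m\<ge>M. norm (\<Sum>n\<in>{1..<m}. f m n) \<le> \<bar>C\<bar> * ((1 + ln (real m)) / real m ^ 2)"
  proof (intro exI allI impI)
    fix m :: nat assume "1 \<le> m"
    have "norm (\<Sum>n\<in>{1..<m}. f m n) \<le> (\<Sum>n\<in>{1..<m}. \<bar>C\<bar> / real m ^ 2 * (1 / real n))"
    proof (rule sum_norm_le)
      fix n assume "n \<in> {1..<m}"
      then have "\<bar>f m n\<bar> \<le> C / (real m ^ 2 * real n)" by (intro bound) auto
      also have "\<dots> \<le> \<bar>C\<bar> / real m ^ 2 * (1 / real n)" by (simp add: divide_right_mono)
      finally show "norm (f m n) \<le> \<bar>C\<bar> / real m ^ 2 * (1 / real n)" by simp
    qed
    also have "\<dots> \<le> \<bar>C\<bar> / real m ^ 2 * (1 + ln (real m))"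
      unfolding sum_distrib_left[symmetric]
      using sum_atLeast1_inverse_le_ln[OF \<open>1 \<le> m\<close>] by (intro mult_left_mono) auto
    finally show "norm (\<Sum>n\<in>{1..<m}. f m n) \<le> \<bar>C\<bar> * ((1 + ln (real m)) / real m ^ 2)"
      by simp
  qed
qed

lemma convergent_sum_mult_partial_sums:
  fixes a c :: "nat \<Rightarrow> real"
  assumes a: "convergent (\<lambda>N. \<Sum>m\<in>{1..<N}. a m)" and c: "summable (\<lambda>n. \<bar>c n\<bar>)"
  shows "convergent (\<lambda>N. \<Sum>m\<in>{1..<N}. a m * (\<Sum>n\<in>{1..<m}. c n))"
proof -
  define A where "A N = (\<Sum>m\<in>{1..<N}. a m)" for N
  obtain K where K: "\<And>N. \<bar>A N\<bar> \<le> K"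
    using convergent_imp_Bseq[OF a] unfolding A_def Bseq_def by auto
  have "convergent (\<lambda>N. \<Sum>n\<in>{1..<N}. c n * A (Suc n))"
  proof (rule convergent_sum_atLeast1, rule summable_rabs_cancel, rule summable_comparison_test)
    show "summable (\<lambda>n. K * \<bar>c n\<bar>)" using c by (rule summable_mult)
    have "\<bar>c n * A (Suc n)\<bar> \<le> K * \<bar>c n\<bar>" for n
      using mult_left_mono[OF K abs_ge_zero] by (simp add: abs_mult mult.commute)
    then show "\<exists>N. \<forall>n\<ge>N. norm \<bar>c n * A (Suc n)\<bar> \<le> K * \<bar>c n\<bar>"
      by simp
  qed
  moreover have "convergent (\<lambda>N. \<Sum>n\<in>{1..<N}. c n)"
    using convergent_sum_atLeast1[OF summable_rabs_cancel[OF c]] .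
  ultimately show ?thesis
    using a unfolding sum_mult_partial_sums_by_parts A_def by (intro convergent_diff convergent_mult)
qed

lemma one_div_power_mult_power_le:
  fixes x y :: real
  assumes "1 \<le> x" "1 \<le> y" "2 \<le> a" "1 \<le> b"
  shows "1 / (x ^ a * y ^ b) \<le> 1 / (x ^ 2 * y)"
proof -
  have "x ^ 2 * y ^ 1 \<le> x ^ a * y ^ b"
    using assms by (intro mult_mono power_increasing) auto
  then show ?thesis
    using assms by (intro divide_left_mono) auto
qed

lemma convergent_T_partial_pair:
  assumes "2 \<le> a" "1 \<le> b"
  shows "convergent (T_partial [a, b])"
  unfolding T_partial_pair
proof (rule convergent_double_sum_if_bounded[where C = 4])
  fix m n :: nat assume "1 \<le> n" "n < m"
  then have "1 / (real m ^ a * real n ^ b) \<le> 1 / (real m ^ 2 * real n)"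
    using assms by (intro one_div_power_mult_power_le) auto
  then show "\<bar>if even m \<and> odd n then 4 / (real m ^ a * real n ^ b) else 0\<bar> \<le> 4 / (real m ^ 2 * real n)"
    by simp
qed

lemma summable_abs_power_div_power:
  fixes z :: real
  assumes "2 \<le> s" "\<bar>z\<bar> \<le> 1"
  shows "summable (\<lambda>n. \<bar>z ^ n / real n ^ s\<bar>)"
proof (rule summable_comparison_test)
  show "summable (\<lambda>n. inverse (real n ^ s))"
    using inverse_power_summable[OF assms(1)] .
  have "\<bar>z ^ n / real n ^ s\<bar> \<le> inverse (real n ^ s)" for n
  proof -
    have "\<bar>z ^ n\<bar> \<le> 1" using assms by (simp add: power_abs power_le_one)
    then show ?thesis
      using mult_right_mono[of "\<bar>z ^ n\<bar>" 1 "inverse (real n ^ s)"] by (simp add: abs_mult divide_inverse)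
  qed
  then show "\<exists>N. \<forall>n\<ge>N. norm \<bar>z ^ n / real n ^ s\<bar> \<le> inverse (real n ^ s)"
    by simp
qed

lemma convergent_euler_partial_single:
  assumes "2 \<le> s" "\<bar>z\<bar> \<le> 1"
  shows "convergent (euler_partial [(s, z)])"
  unfolding euler_partial_single
  using convergent_sum_atLeast1[OF summable_rabs_cancel[OF summable_abs_power_div_power[OF assms]]] .

lemma convergent_euler_partial_pair:
  assumes "2 \<le> s" "1 \<le> t" "\<bar>z\<bar> \<le> 1" "\<bar>y\<bar> \<le> 1"
  shows "convergent (euler_partial [(s, z), (t, y)])"
  unfolding euler_partial_pair sum_distrib_left
proof (rule convergent_double_sum_if_bounded[where C = 1])
  fix m n :: nat assume "1 \<le> n" "n < m"
  then have "1 / (real m ^ s * real n ^ t) \<le> 1 / (real m ^ 2 * real n)"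
    using assms by (intro one_div_power_mult_power_le) auto
  moreover have "\<bar>z ^ m * y ^ n\<bar> \<le> 1"
    using assms by (simp add: abs_mult power_abs mult_le_one power_le_one)
  ultimately have "\<bar>z ^ m * y ^ n\<bar> * (1 / (real m ^ s * real n ^ t)) \<le> 1 * (1 / (real m ^ 2 * real n))"
    by (intro mult_mono) auto
  then show "\<bar>z ^ m / real m ^ s * (y ^ n / real n ^ t)\<bar> \<le> 1 / (real m ^ 2 * real n)"
    by (simp add: abs_mult)
qed

lemma convergent_alternating_harmonic: "convergent (\<lambda>N. \<Sum>m\<in>{1..<N}. (-1) ^ m / real m)"
proof (rule convergent_sum_atLeast1)
  have "summable (\<lambda>k. - ((-1) ^ k / real (Suc k)))"
    using sums_summable[OF alternating_harmonic_series_sums] by (rule summable_minus)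
  then show "summable (\<lambda>m. (-1) ^ m / real m)"
    by (subst summable_Suc_iff[symmetric]) simp
qed

lemma convergent_euler_partial_alternating_pair:
  assumes "2 \<le> t" "\<bar>y\<bar> \<le> 1"
  shows "convergent (euler_partial [(1, -1), (t, y)])"
  unfolding euler_partial_pair power_one_right
  using convergent_alternating_harmonic summable_abs_power_div_power[OF assms]
  by (rule convergent_sum_mult_partial_sums)

lemma odd_zeta_partial_increment_le:
  assumes "1 \<le> n" "n < N"
  shows "(odd_zeta_partial 1 N - odd_zeta_partial 1 (N - n)) / real n ^ 2 \<le>
    (1 + (\<Sum>k\<in>{1..<N}. 1 / real k)) / (real N * real n)"
proof -
  define S where "S = (\<Sum>j\<in>{N - n..<N}. 1 / real j)"
  have "odd_zeta_partial 1 N - odd_zeta_partial 1 (N - n) \<le> S"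
    unfolding S_def by (subst odd_zeta_partial_diff) (auto intro!: sum_mono)
  then have "(odd_zeta_partial 1 N - odd_zeta_partial 1 (N - n)) / real n ^ 2 \<le> S / real n ^ 2"
    by (rule divide_right_mono) simp
  also have "\<dots> = (\<Sum>j\<in>{N - n..<N}. 1 / (real n ^ 2 * real j))"
    unfolding S_def sum_divide_distrib by (simp add: mult.commute)
  also have "\<dots> \<le> (\<Sum>j\<in>{N - n..<N}. (1 / real n ^ 2 + 1 / real j / real n) / real N)"
  proof (rule sum_mono)
    fix j assume j: "j \<in> {N - n..<N}"
    then have pos: "0 < real j" "0 < real n" "0 < real N" using assms by auto
    have "real N / (real n ^ 2 * real j) \<le> (real n + real j) / (real n ^ 2 * real j)"
      using j assms by (intro divide_right_mono) auto
    then show "1 / (real n ^ 2 * real j) \<le> (1 / real n ^ 2 + 1 / real j / real n) / real N"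
      using pos by (simp add: field_simps power2_eq_square)
  qed
  also have "\<dots> = (real n * (1 / real n ^ 2) + S / real n) / real N"
    unfolding S_def sum_divide_distrib[symmetric] sum.distrib using assms by simp
  also have "\<dots> = (1 + S) / (real N * real n)"
    using assms by (simp add: field_simps power2_eq_square)
  also have "\<dots> \<le> (1 + (\<Sum>k\<in>{1..<N}. 1 / real k)) / (real N * real n)"
    unfolding S_def using assms by (intro divide_right_mono add_left_mono sum_mono2) auto
  finally show ?thesis .
qed

lemma odd_zeta_partial_tail_sum_tendsto_zero:
  assumes "2 \<le> v"
  shows "(\<lambda>N. \<Sum>n\<in>{1..<N}. if odd n then (odd_zeta_partial 1 N - odd_zeta_partial 1 (N - n)) / real n ^ v else 0)
    \<longlonglongrightarrow> 0"
proof (rule tendsto_sandwich[of "\<lambda>_. 0" _ _ "\<lambda>N. (2 + ln (real N)) * (1 + ln (real N)) / real N"])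
  define D where "D N n = odd_zeta_partial 1 N - odd_zeta_partial 1 (N - n)" for N n
  have D_nonneg: "0 \<le> D N n" if "n < N" for N n
    unfolding D_def using that by (subst odd_zeta_partial_diff) (auto intro!: sum_nonneg)
  show "\<forall>\<^sub>F N in sequentially. 0 \<le> (\<Sum>n\<in>{1..<N}. if odd n then D N n / real n ^ v else 0)"
    by (intro always_eventually allI sum_nonneg) (auto intro!: divide_nonneg_nonneg D_nonneg)
  show "\<forall>\<^sub>F N in sequentially. (\<Sum>n\<in>{1..<N}. if odd n then D N n / real n ^ v else 0)
      \<le> (2 + ln (real N)) * (1 + ln (real N)) / real N"
  proof (rule eventually_sequentiallyI[of 1])
    fix N :: nat assume "1 \<le> N"
    define H where "H = (\<Sum>k\<in>{1..<N}. 1 / real k)"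
    have H: "0 \<le> H" "H \<le> 1 + ln (real N)"
      unfolding H_def using sum_atLeast1_inverse_le_ln[OF \<open>1 \<le> N\<close>] by (auto intro: sum_nonneg)
    have "(\<Sum>n\<in>{1..<N}. if odd n then D N n / real n ^ v else 0) \<le> (\<Sum>n\<in>{1..<N}. (1 + H) / real N * (1 / real n))"
    proof (rule sum_mono)
      fix n assume n: "n \<in> {1..<N}"
      have "D N n / real n ^ v \<le> D N n / real n ^ 2"
        using n assms D_nonneg[of n N] by (intro divide_left_mono power_increasing) auto
      also have "\<dots> \<le> (1 + H) / real N * (1 / real n)"
        using odd_zeta_partial_increment_le[of n N] n unfolding D_def H_def by simp
      finally show "(if odd n then D N n / real n ^ v else 0) \<le> (1 + H) / real N * (1 / real n)"
        using n H by auto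
    qed
    also have "\<dots> = (1 + H) * H / real N"
      unfolding H_def sum_distrib_left[symmetric] by simp
    also have "\<dots> \<le> (2 + ln (real N)) * (1 + ln (real N)) / real N"
      using H by (intro divide_right_mono mult_mono) auto
    finally show "(\<Sum>n\<in>{1..<N}. if odd n then D N n / real n ^ v else 0)
      \<le> (2 + ln (real N)) * (1 + ln (real N)) / real N" .
  qed
  show "(\<lambda>N. (2 + ln (real N)) * (1 + ln (real N)) / real N) \<longlonglongrightarrow> 0"
    by real_asymp
qed (simp)

theorem corollary4p3:
  fixes w v :: nat
  assumes "w \<ge> 3" and "v = w - 1"
  shows "(\<Sum>a\<in>{2..w-1}. T_value [a, w - a]) =
    2 * (euler_zeta [(w, 1)] - euler_zeta [(w, -1)]
         + euler_zeta [(v, -1), (1, -1)] + euler_zeta [(1, -1), (v, -1)]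
         - euler_zeta [(v, -1), (1, 1)] - euler_zeta [(1, -1), (v, 1)])"
proof -
  from assms have w: "w = Suc v" and v: "2 \<le> v" by auto
  have lim: "f \<longlonglongrightarrow> lim f" if "convergent f" for f :: "nat \<Rightarrow> real"
    using that by (rule convergent_LIMSEQ_iff[THEN iffD1])
  have lhs: "(\<lambda>N. \<Sum>a\<in>{2..v}. T_partial [a, Suc v - a] N) \<longlonglongrightarrow> (\<Sum>a\<in>{2..v}. T_value [a, Suc v - a])"
    unfolding T_value_def using v by (intro tendsto_sum lim convergent_T_partial_pair) auto
  have rhs: "(\<lambda>N. 2 * (euler_partial [(Suc v, 1)] N - euler_partial [(Suc v, -1)] N
        + euler_partial [(v, -1), (1, -1)] N + euler_partial [(1, -1), (v, -1)] N
        - euler_partial [(v, -1), (1, 1)] N - euler_partial [(1, -1), (v, 1)] N)) \<longlonglongrightarrow>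
      2 * (euler_zeta [(Suc v, 1)] - euler_zeta [(Suc v, -1)]
        + euler_zeta [(v, -1), (1, -1)] + euler_zeta [(1, -1), (v, -1)]
        - euler_zeta [(v, -1), (1, 1)] - euler_zeta [(1, -1), (v, 1)])"
    unfolding euler_zeta_def using v
    by (intro tendsto_intros lim convergent_euler_partial_single convergent_euler_partial_pair
        convergent_euler_partial_alternating_pair) auto
  from LIMSEQ_unique[OF tendsto_diff[OF lhs rhs, unfolded sum_T_partial_minus_euler_partial_combination[OF v]]
      tendsto_mult_right_zero[OF odd_zeta_partial_tail_sum_tendsto_zero[OF v]]]
  show ?thesis
    unfolding w by simp
qed

end
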